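(* Let $p_1,p_2\ge 0$ with $p_1+p_2\le 1$. For every $n\ge 1$, the expected value of the subtree number index of the random spiro chain $RSC(n,p_1,p_2)$ is \[ E(\mathrm{STN}(RSC(n,p_1,p_2)))=\frac{400}{(11+4p_1+p_2)^2}(12+4p_1+p_2)^{n}+\frac{140p_1+35p_2-15}{11+4p_1+p_2}\,n-\frac{400}{(11+4p_1+p_2)^2}+1. \]
   Context: For a graph $G$, $\mathrm{STN}(G)$ is the number of nonempty subtrees of $G$ (subgraphs that are trees, single vertices included). A spiro chain with $n$ hexagons consists of hexagons (6-cycles) $H_1,\dots,H_n$ such that $H_i$ and $H_{i+1}$ share exactly one vertex (a cut vertex) for $i=1,\dots,n-1$, non-consecutive hexagons are vertex-disjoint, and the graph is the union of these hexagons. For $2\le i\le n-1$, $H_i$ contains two distinct cut vertices (shared with $H_{i-1}$ and $H_{i+1}$); their distance in $H_i$ is $1$ (ortho), $2$ (meta) or $3$ (para). The random spiro chain $RSC(n,p_1,p_2)$ is built by stepwise addition of terminal hexagons: for $n\le 2$ the chain is unique, and at each step $i=3,\dots,n$, the new hexagon $H_i$ is attached at a vertex of $H_{i-1}$ which is at distance $1$ (ortho) from the cut vertex shared by $H_{i-1}$ and $H_{i-2}$ with probability $p_1$, at distance $2$ (meta) with probability $p_2$, and at distance $3$ (para) with probability $1-p_1-p_2$, independently at each step. *)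

theory Defs
  imports Complex_Main
begin

text \<open>A (finite simple) graph is given by a vertex set V and a set E of edges,
  each edge being a 2-element set of vertices.\<close>

definition adj_rel :: "'a set set \<Rightarrow> ('a \<times> 'a) set" where
  "adj_rel E = {(x, y). {x, y} \<in> E}"

definition connected_graph :: "'a set \<Rightarrow> 'a set set \<Rightarrow> bool" where
  "connected_graph V E \<longleftrightarrow> (\<forall>u\<in>V. \<forall>v\<in>V. (u, v) \<in> (adj_rel E)\<^sup>*)"

definition is_cycle :: "'a set set \<Rightarrow> 'a list \<Rightarrow> bool" where
  "is_cycle E vs \<longleftrightarrow> length vs \<ge> 3 \<and> distinct vs \<and>
     (\<forall>k < length vs. {vs ! k, vs ! ((k + 1) mod length vs)} \<in> E)"

definition acyclic_graph :: "'a set set \<Rightarrow> bool" where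
  "acyclic_graph E \<longleftrightarrow> \<not> (\<exists>vs. is_cycle E vs)"

definition is_tree :: "'a set \<Rightarrow> 'a set set \<Rightarrow> bool" where
  "is_tree V E \<longleftrightarrow> V \<noteq> {} \<and> connected_graph V E \<and> acyclic_graph E"

definition subtrees :: "'a set \<Rightarrow> 'a set set \<Rightarrow> ('a set \<times> 'a set set) set" where
  "subtrees V E = {(V', E'). V' \<subseteq> V \<and> E' \<subseteq> E \<and> (\<forall>e\<in>E'. e \<subseteq> V') \<and> is_tree V' E'}"

definition STN :: "'a set \<Rightarrow> 'a set set \<Rightarrow> nat" where
  "STN V E = card (subtrees V E)"

text \<open>Hexagon i (0-indexed, i < n) has positions 0..5 around the cycle. Position 0 of
  hexagon i (for i > 0) is the cut vertex shared with hexagon i-1; it is identified with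
  the exit position of hexagon i-1. The exit position of hexagon 0 is 1 (any choice gives
  an isomorphic graph); the exit position of hexagon k (1 \<le> k \<le> n-2) is cs!(k-1) \<in> {1,2,3},
  i.e. the distance (ortho = 1, meta = 2, para = 3) from its entry cut vertex.\<close>

definition spiro_exit :: "nat list \<Rightarrow> nat \<Rightarrow> nat" where
  "spiro_exit cs i = (if i = 0 then 1 else cs ! (i - 1))"

definition spiro_canon :: "nat list \<Rightarrow> nat \<times> nat \<Rightarrow> nat \<times> nat" where
  "spiro_canon cs v = (case v of (i, j) \<Rightarrow>
      if j = 0 \<and> i > 0 then (i - 1, spiro_exit cs (i - 1)) else (i, j))"

definition spiro_V :: "nat \<Rightarrow> nat list \<Rightarrow> (nat \<times> nat) set" where
  "spiro_V n cs = spiro_canon cs ` {(i, j). i < n \<and> j < 6}"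

definition spiro_E :: "nat \<Rightarrow> nat list \<Rightarrow> (nat \<times> nat) set set" where
  "spiro_E n cs = (\<lambda>(i, j). {spiro_canon cs (i, j), spiro_canon cs (i, (j + 1) mod 6)})
                    ` {(i, j). i < n \<and> j < 6}"

text \<open>Probability of an attachment choice: 1 = ortho, 2 = meta, 3 = para.\<close>
definition choice_prob :: "real \<Rightarrow> real \<Rightarrow> nat \<Rightarrow> real" where
  "choice_prob p1 p2 c = (if c = 1 then p1 else if c = 2 then p2 else 1 - p1 - p2)"

text \<open>Expected STN of RSC(n,p1,p2): the choices for steps 3..n are independent, so the
  distribution on choice lists of length n-2 is the product distribution.\<close>
definition expected_STN_RSC :: "nat \<Rightarrow> real \<Rightarrow> real \<Rightarrow> real" where
  "expected_STN_RSC n p1 p2 =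
     (\<Sum>cs \<in> {cs. length cs = n - 2 \<and> set cs \<subseteq> {1, 2, 3}}.
        (\<Prod>c\<leftarrow>cs. choice_prob p1 p2 c) * real (STN (spiro_V n cs) (spiro_E n cs)))"

end

(* Gluing two graphs at a single cut vertex v, a subtree of the union either avoids v, and then
   lies on one side, or passes through v, and then it is the union of a subtree through v on each
   side. For a spiro chain let a be its number of subtrees and b the number of those through the
   vertex where the next hexagon is attached. Attaching a hexagon whose next attachment vertex is
   at distance d gives a' = a + 15 + 20 b and b' = d (6 - d) + c_d b with c_1, c_2, c_3 = 16, 13, 12,
   all constants being subtree counts of a single hexagon. Averaging over the random choice of d
   yields the linear recurrences E b' = (9 - 4 p1 - p2) + (12 + 4 p1 + p2) E b and
   E a' = E a + 15 + 20 E b, whose solution is the closed formula. *)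

theory Submission
  imports Defs
begin

lemma adj_rel_iff [simp]: "(x, y) \<in> adj_rel E \<longleftrightarrow> {x, y} \<in> E"
  by (simp add: adj_rel_def)

lemma converse_adj_rel [simp]: "(adj_rel E)\<inverse> = adj_rel E"
  by (auto simp: adj_rel_def insert_commute)

lemma rtrancl_adj_rel_sym: "(x, y) \<in> (adj_rel E)\<^sup>* \<Longrightarrow> (y, x) \<in> (adj_rel E)\<^sup>*"
  by (metis converse_adj_rel rtrancl_converseI)

lemma rtrancl_adj_rel_mono:
  assumes "(x, y) \<in> (adj_rel E)\<^sup>*" "E \<subseteq> E'"
  shows "(x, y) \<in> (adj_rel E')\<^sup>*"
proof -
  have "adj_rel E \<subseteq> adj_rel E'" using assms(2) by (auto simp: adj_rel_def)
  then show ?thesis using assms(1) rtrancl_mono by blast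
qed

lemma connected_graphI_hub:
  assumes "\<And>u. u \<in> A \<Longrightarrow> (u, v) \<in> (adj_rel B)\<^sup>*"
  shows "connected_graph A B"
  unfolding connected_graph_def by (meson assms rtrancl_adj_rel_sym rtrancl_trans)

lemma cycle_edge: "is_cycle E vs \<Longrightarrow> k < length vs \<Longrightarrow> {vs ! k, vs ! ((k + 1) mod length vs)} \<in> E"
  unfolding is_cycle_def by auto

lemma acyclic_graph_subset: "acyclic_graph E' \<Longrightarrow> E \<subseteq> E' \<Longrightarrow> acyclic_graph E"
  unfolding acyclic_graph_def is_cycle_def by blast

lemma acyclic_graph_empty: "acyclic_graph {}"
  unfolding acyclic_graph_def by (metis cycle_edge empty_iff is_cycle_def le_zero_eq not_less zero_neq_numeral)

lemma ex_cyclic_transition: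
  fixes P :: "nat \<Rightarrow> bool"
  assumes "i < L" "j < L" "P i" "\<not> P j"
  shows "\<exists>k<L. P k \<and> \<not> P ((k + 1) mod L)"
proof (rule ccontr)
  assume "\<not> ?thesis"
  then have step: "\<And>k. k < L \<Longrightarrow> P k \<Longrightarrow> P ((k + 1) mod L)" by auto
  have "P ((i + m) mod L)" for m
  proof (induction m)
    case 0 then show ?case using assms by simp
  next
    case (Suc m)
    have "(i + m) mod L < L" using assms by simp
    from step[OF this Suc] show ?case by (simp add: mod_Suc_eq)
  qed
  from this[of "j + L - i"] show False using assms by simp
qed

lemma Suc_mod_inj:
  fixes k k' L :: nat
  assumes "k < L" "k' < L" "(k + 1) mod L = (k' + 1) mod L"
  shows "k = k'"
proof -
  have "(k + 1) mod L = (if k + 1 = L then 0 else k + 1)" "(k' + 1) mod L = (if k' + 1 = L then 0 else k' + 1)"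
    using assms(1,2) by auto
  then show ?thesis using assms by (auto split: if_splits)
qed

lemma mod_pred_Suc:
  fixes k L :: nat
  assumes "k < L"
  shows "((k + L - 1) mod L + 1) mod L = k"
proof (cases k)
  case 0
  then show ?thesis using assms by (simp add: mod_Suc)
next
  case (Suc m)
  then have "(k + L - 1) mod L = m" using assms by simp
  then show ?thesis using Suc assms by simp
qed

lemma is_cycle_two_neighbours:
  assumes cy: "is_cycle E vs" and x: "x \<in> set vs"
  obtains y z where "y \<noteq> z" "y \<in> set vs" "z \<in> set vs" "{x, y} \<in> E" "{x, z} \<in> E"
proof -
  let ?L = "length vs"
  have L: "?L \<ge> 3" and dist: "distinct vs" using cy by (auto simp: is_cycle_def)
  obtain k where k: "k < ?L" "x = vs ! k" using x by (metis in_set_conv_nth)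
  let ?i = "(k + 1) mod ?L" and ?j = "(k + ?L - 1) mod ?L"
  have ij: "?i < ?L" "?j < ?L" using k(1) by (meson mod_less_divisor order.strict_trans1 zero_le)+
  have "(?j + 1) mod ?L = k" using k(1) by (rule mod_pred_Suc)
  then have next_edge: "{vs ! ?j, x} \<in> E" using cycle_edge[OF cy ij(2)] k by simp
  have "?i \<noteq> ?j"
  proof
    assume "?i = ?j"
    then have "((k + 1) mod ?L + 1) mod ?L = k" using \<open>(?j + 1) mod ?L = k\<close> by simp
    then have "(k + 2) mod ?L = k" by (simp add: mod_Suc_eq)
    moreover have "(k + 2) mod ?L \<noteq> k"
      using k(1) L by (cases "k + 2 < ?L") (auto simp: mod_if)
    ultimately show False by simp
  qed
  then have "vs ! ?i \<noteq> vs ! ?j" using nth_eq_iff_index_eq[OF dist ij] by simp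
  moreover have "{x, vs ! ?i} \<in> E" using cycle_edge[OF cy k(1)] k by simp
  moreover have "{x, vs ! ?j} \<in> E" using next_edge by (simp add: insert_commute)
  ultimately show ?thesis using that ij by (meson nth_mem)
qed

definition loop_free :: "'a set set \<Rightarrow> bool" where
  "loop_free E \<longleftrightarrow> (\<forall>e\<in>E. card e = 2)"

lemma loop_free_edge_nonempty: "loop_free E \<Longrightarrow> e \<in> E \<Longrightarrow> e \<noteq> {}"
  unfolding loop_free_def by auto

lemma loop_free_edge_not_subset_singleton: "loop_free E \<Longrightarrow> e \<in> E \<Longrightarrow> \<not> e \<subseteq> {v}"
  unfolding loop_free_def using card_mono[of "{v}" e] by fastforce

lemma is_tree_without_edges: "is_tree A {} \<longleftrightarrow> (\<exists>u. A = {u})"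
proof
  assume tr: "is_tree A {}"
  then obtain u where u: "u \<in> A" by (auto simp: is_tree_def)
  have no_adj: "adj_rel {} = {}" by (simp add: adj_rel_def)
  have "w = u" if "w \<in> A" for w
    using tr u that unfolding is_tree_def connected_graph_def no_adj rtrancl_empty by blast
  then have "A = {u}" using u by blast
  then show "\<exists>u. A = {u}" ..
next
  assume "\<exists>u. A = {u}"
  then show "is_tree A {}" by (auto simp: is_tree_def connected_graph_def acyclic_graph_empty)
qed

lemma tree_vertices_eq_Union:
  assumes tr: "is_tree A B" and edges: "\<forall>e\<in>B. e \<subseteq> A" and B: "B \<noteq> {}" "loop_free B"
  shows "A = \<Union>B"
proof
  show "A \<subseteq> \<Union>B"
  proof
    fix u assume u: "u \<in> A"
    obtain e where e: "e \<in> B" using B(1) by blast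
    then obtain a where "a \<in> e" using loop_free_edge_nonempty[OF B(2)] by blast
    then have "(u, a) \<in> (adj_rel B)\<^sup>*" using tr u e edges by (auto simp: is_tree_def connected_graph_def)
    then show "u \<in> \<Union>B"
    proof (cases rule: converse_rtranclE)
      case base then show ?thesis using e \<open>a \<in> e\<close> by auto
    next
      case (step y)
      then have "{u, y} \<in> B" by simp
      then show ?thesis by auto
    qed
  qed
qed (use edges in blast)

lemma mem_subtrees_iff:
  "(A, B) \<in> subtrees V E \<longleftrightarrow> A \<subseteq> V \<and> B \<subseteq> E \<and> (\<forall>e\<in>B. e \<subseteq> A) \<and> is_tree A B"
  by (simp add: subtrees_def)

lemma subtrees_mono: "V \<subseteq> V' \<Longrightarrow> E \<subseteq> E' \<Longrightarrow> subtrees V E \<subseteq> subtrees V' E'"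
  unfolding subtrees_def by auto

lemma finite_subtrees: "finite V \<Longrightarrow> finite E \<Longrightarrow> finite (subtrees V E)"
  by (rule finite_subset[of _ "Pow V \<times> Pow E"]) (auto simp: subtrees_def)

definition count_subtrees :: "'a set \<Rightarrow> 'a set set \<Rightarrow> ('a set \<Rightarrow> bool) \<Rightarrow> nat" where
  "count_subtrees V E P = card {T \<in> subtrees V E. P (fst T)}"

lemma STN_eq_count_subtrees: "STN V E = count_subtrees V E (\<lambda>_. True)"
  by (simp add: STN_def count_subtrees_def)

lemma count_subtrees_split:
  assumes "finite V" "finite E"
  shows "count_subtrees V E P = count_subtrees V E (\<lambda>A. Q A \<and> P A) + count_subtrees V E (\<lambda>A. \<not> Q A \<and> P A)"
proof -
  have "{T \<in> subtrees V E. P (fst T)} =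
      {T \<in> subtrees V E. Q (fst T) \<and> P (fst T)} \<union> {T \<in> subtrees V E. \<not> Q (fst T) \<and> P (fst T)}"
    by auto
  then show ?thesis
    unfolding count_subtrees_def using finite_subtrees[OF assms]
    by (simp add: card_Un_disjoint disjoint_iff)
qed

lemma count_subtrees_cong:
  assumes "\<And>A B. (A, B) \<in> subtrees V E \<Longrightarrow> P A \<longleftrightarrow> Q A"
  shows "count_subtrees V E P = count_subtrees V E Q"
  unfolding count_subtrees_def by (metis (mono_tags, lifting) assms prod.collapse)

lemma count_subtrees_eq_0:
  assumes "\<And>A B. (A, B) \<in> subtrees V E \<Longrightarrow> \<not> P A"
  shows "count_subtrees V E P = 0"
proof -
  have "count_subtrees V E P = count_subtrees V E (\<lambda>_. False)"
    by (rule count_subtrees_cong) (use assms in blast)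
  then show ?thesis by (simp add: count_subtrees_def)
qed

lemma rtrancl_adj_rel_image:
  assumes "(x, y) \<in> (adj_rel B)\<^sup>*"
  shows "(f x, f y) \<in> (adj_rel ((`) f ` B))\<^sup>*"
  using assms
proof (induction rule: rtrancl_induct)
  case (step y z)
  then have "f ` {y, z} \<in> (`) f ` B" by (intro imageI) simp
  then have "(f y, f z) \<in> adj_rel ((`) f ` B)" by simp
  with step.IH show ?case by (rule rtrancl_into_rtrancl)
qed simp

lemma is_cycle_inv_image:
  assumes inj: "inj_on f A" and edges: "\<forall>e\<in>B. e \<subseteq> A" and cy: "is_cycle ((`) f ` B) vs"
  shows "is_cycle B (map (inv_into A f) vs)"
proof -
  let ?g = "inv_into A f" and ?L = "length vs"
  have edge: "\<exists>e\<in>B. {vs ! k, vs ! ((k + 1) mod ?L)} = f ` e" if "k < ?L" for k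
    using cycle_edge[OF cy that] by blast
  have "set vs \<subseteq> f ` A"
  proof
    fix x assume "x \<in> set vs"
    then obtain k where k: "k < ?L" "x = vs ! k" by (metis in_set_conv_nth)
    then obtain e where "e \<in> B" "{vs ! k, vs ! ((k + 1) mod ?L)} = f ` e" using edge by blast
    then show "x \<in> f ` A" using k edges by blast
  qed
  then have "distinct (map ?g vs)"
    using cy inj_on_inv_into inj_on_subset by (fastforce simp: is_cycle_def distinct_map)
  moreover have "{map ?g vs ! k, map ?g vs ! ((k + 1) mod ?L)} \<in> B" if k: "k < ?L" for k
  proof -
    obtain e where e: "e \<in> B" "{vs ! k, vs ! ((k + 1) mod ?L)} = f ` e" using edge k by blast
    have "?g ` f ` e = e" using inv_into_image_cancel[OF inj] edges e(1) by blast
    moreover have "(k + 1) mod ?L < ?L" using k by (intro mod_less_divisor) linarith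
    ultimately show ?thesis using e k by (metis image_empty image_insert nth_map)
  qed
  ultimately show ?thesis using cy by (simp add: is_cycle_def)
qed

lemma is_tree_image:
  assumes inj: "inj_on f A" and edges: "\<forall>e\<in>B. e \<subseteq> A" and tr: "is_tree A B"
  shows "is_tree (f ` A) ((`) f ` B)"
proof -
  have "connected_graph (f ` A) ((`) f ` B)"
    unfolding connected_graph_def
  proof (intro ballI)
    fix x y assume "x \<in> f ` A" "y \<in> f ` A"
    then obtain a b where ab: "a \<in> A" "b \<in> A" "x = f a" "y = f b" by blast
    then have "(a, b) \<in> (adj_rel B)\<^sup>*" using tr by (simp add: is_tree_def connected_graph_def)
    then show "(x, y) \<in> (adj_rel ((`) f ` B))\<^sup>*" unfolding ab by (rule rtrancl_adj_rel_image)
  qed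
  moreover have "acyclic_graph ((`) f ` B)"
    using tr is_cycle_inv_image[OF inj edges] unfolding is_tree_def acyclic_graph_def by metis
  ultimately show ?thesis using tr by (simp add: is_tree_def)
qed

lemma edges_image_subset: "\<forall>e\<in>B. e \<subseteq> A \<Longrightarrow> \<forall>e\<in>(`) f ` B. e \<subseteq> f ` A"
  by blast

lemma subtrees_image:
  assumes inj: "inj_on f V" and edges: "\<forall>e\<in>E. e \<subseteq> V"
  shows "subtrees (f ` V) ((`) f ` E) = (\<lambda>(A, B). (f ` A, (`) f ` B)) ` subtrees V E"
proof (intro equalityI subsetI)
  fix T assume "T \<in> (\<lambda>(A, B). (f ` A, (`) f ` B)) ` subtrees V E"
  then obtain A B where T: "T = (f ` A, (`) f ` B)" "(A, B) \<in> subtrees V E" by auto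
  then have s: "A \<subseteq> V" "B \<subseteq> E" "\<forall>e\<in>B. e \<subseteq> A" "is_tree A B" by (auto simp: mem_subtrees_iff)
  have "is_tree (f ` A) ((`) f ` B)" using inj_on_subset[OF inj s(1)] s(3,4) by (rule is_tree_image)
  then show "T \<in> subtrees (f ` V) ((`) f ` E)"
    unfolding T(1) mem_subtrees_iff using s(1,2) edges_image_subset[OF s(3), of f] by blast
next
  fix T assume T0: "T \<in> subtrees (f ` V) ((`) f ` E)"
  then obtain A' B' where T: "T = (A', B')" by fastforce
  from T0 T have s: "A' \<subseteq> f ` V" "B' \<subseteq> (`) f ` E" "\<forall>e\<in>B'. e \<subseteq> A'" "is_tree A' B'"
    by (auto simp: mem_subtrees_iff)
  define g where "g = inv_into V f"
  have fge: "f ` g ` e = e" if "e \<in> B'" for e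
    unfolding g_def using s(1,3) that by (meson image_inv_into_cancel order_trans)
  have gfe: "g ` f ` e = e" if "e \<in> E" for e
    unfolding g_def using inv_into_image_cancel[OF inj] edges that by blast
  have "(`) g ` B' \<subseteq> E" using s(2) gfe by auto
  moreover have "g ` A' \<subseteq> V" unfolding g_def using s(1) by (auto intro: inv_into_into)
  moreover have "is_tree (g ` A') ((`) g ` B')"
    using inj_on_inv_into[OF s(1)] s(3,4) unfolding g_def by (rule is_tree_image)
  ultimately have sub: "(g ` A', (`) g ` B') \<in> subtrees V E"
    unfolding mem_subtrees_iff using edges_image_subset[OF s(3), of g] by blast
  have "f ` g ` A' = A'" unfolding g_def using s(1) by (simp add: image_inv_into_cancel)
  moreover have "(`) f ` (`) g ` B' = B'" using fge by (simp add: image_image)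
  ultimately have "T = (\<lambda>(A, B). (f ` A, (`) f ` B)) (g ` A', (`) g ` B')" using T by simp
  then show "T \<in> (\<lambda>(A, B). (f ` A, (`) f ` B)) ` subtrees V E" using sub by (rule image_eqI)
qed

lemma count_subtrees_image:
  assumes inj: "inj_on f V" and edges: "\<forall>e\<in>E. e \<subseteq> V"
  shows "count_subtrees (f ` V) ((`) f ` E) P = count_subtrees V E (\<lambda>A. P (f ` A))"
proof -
  define h where "h = (\<lambda>(A :: 'a set, B :: 'a set set). (f ` A, (`) f ` B))"
  have eq: "{T \<in> subtrees (f ` V) ((`) f ` E). P (fst T)} = h ` {T \<in> subtrees V E. P (f ` fst T)}"
    unfolding subtrees_image[OF inj edges] h_def by force
  have inj_edges: "inj_on ((`) f) E"
    using inj edges by (meson PowI inj_on_image_Pow inj_on_subset subsetI)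
  have "inj_on h (subtrees V E)"
  proof (rule inj_onI)
    fix x y assume x: "x \<in> subtrees V E" and y: "y \<in> subtrees V E" and eq: "h x = h y"
    obtain A B A' B' where xy: "x = (A, B)" "y = (A', B')" by fastforce
    have s: "A \<subseteq> V" "A' \<subseteq> V" "B \<subseteq> E" "B' \<subseteq> E" using x y xy by (auto simp: mem_subtrees_iff)
    have "f ` A = f ` A'" "(`) f ` B = (`) f ` B'" using eq xy h_def by auto
    then have "A = A'" "B = B'"
      using s inj inj_edges by (meson inj_on_image_eq_iff)+
    then show "x = y" using xy by simp
  qed
  then have "inj_on h {T \<in> subtrees V E. P (f ` fst T)}" by (rule inj_on_subset) auto
  then show ?thesis unfolding count_subtrees_def eq by (simp add: card_image)
qed

section \<open>Gluing two graphs at a cut vertex\<close>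

definition glue :: "('a set \<times> 'a set set) \<times> ('a set \<times> 'a set set) \<Rightarrow> 'a set \<times> 'a set set" where
  "glue = (\<lambda>((A1, B1), (A2, B2)). (A1 \<union> A2, B1 \<union> B2))"

locale cut_vertex_union =
  fixes V1 V2 :: "'a set" and E1 E2 :: "'a set set" and v :: 'a
  assumes cut_vertex: "V1 \<inter> V2 = {v}"
    and edges1: "\<forall>e\<in>E1. e \<subseteq> V1" and edges2: "\<forall>e\<in>E2. e \<subseteq> V2"
    and loop_free: "loop_free (E1 \<union> E2)"

begin

lemma swap: "cut_vertex_union V2 V1 E2 E1 v"
  using cut_vertex edges1 edges2 loop_free by unfold_locales (auto simp: Un_commute)

lemma edges_disjoint: "E1 \<inter> E2 = {}"
proof (rule ccontr)
  assume "E1 \<inter> E2 \<noteq> {}"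
  then obtain e where e: "e \<in> E1" "e \<in> E2" by auto
  then have "e \<subseteq> {v}" using edges1 edges2 cut_vertex by blast
  then show False using loop_free_edge_not_subset_singleton[OF loop_free, of e v] e by simp
qed

lemma rtrancl_side1_or_cut_vertex:
  assumes B: "B \<subseteq> E1 \<union> E2" and u: "u \<in> V1" and r: "(u, x) \<in> (adj_rel B)\<^sup>*"
  shows "(x \<in> V1 \<and> (u, x) \<in> (adj_rel (B \<inter> E1))\<^sup>*) \<or> (u, v) \<in> (adj_rel (B \<inter> E1))\<^sup>*"
  using r
proof (induction rule: rtrancl_induct)
  case base
  then show ?case using u by simp
next
  case (step y z)
  show ?case
  proof (cases "(u, v) \<in> (adj_rel (B \<inter> E1))\<^sup>*")
    case False
    with step.IH have y: "y \<in> V1" "(u, y) \<in> (adj_rel (B \<inter> E1))\<^sup>*" by auto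
    have yz: "{y, z} \<in> B" using step.hyps(2) by simp
    show ?thesis
    proof (cases "{y, z} \<in> E1")
      case True
      then have "z \<in> V1" using edges1 by auto
      moreover have "(y, z) \<in> adj_rel (B \<inter> E1)" using yz True by simp
      ultimately show ?thesis using y by (meson rtrancl.rtrancl_into_rtrancl)
    next
      case False
      then have "{y, z} \<in> E2" using yz B by blast
      then have "y \<in> V2" using edges2 by blast
      then have "y = v" using y(1) cut_vertex by blast
      then show ?thesis using y(2) by simp
    qed
  qed simp
qed

lemma subtree_restrict1:
  assumes T: "(A, B) \<in> subtrees (V1 \<union> V2) (E1 \<union> E2)" and vA: "v \<in> A"
  shows "(A \<inter> V1, B \<inter> E1) \<in> subtrees V1 E1"
proof -
  from T have BE: "B \<subseteq> E1 \<union> E2" and eA: "\<forall>e\<in>B. e \<subseteq> A" and tr: "is_tree A B"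
    by (auto simp: mem_subtrees_iff)
  have "(u, v) \<in> (adj_rel (B \<inter> E1))\<^sup>*" if "u \<in> A \<inter> V1" for u
  proof -
    have "(u, v) \<in> (adj_rel B)\<^sup>*" using tr that vA by (auto simp: is_tree_def connected_graph_def)
    from rtrancl_side1_or_cut_vertex[OF BE _ this] that show ?thesis by auto
  qed
  then have "connected_graph (A \<inter> V1) (B \<inter> E1)" by (rule connected_graphI_hub)
  moreover have "acyclic_graph (B \<inter> E1)"
    using tr acyclic_graph_subset[of B "B \<inter> E1"] by (auto simp: is_tree_def)
  moreover have "v \<in> A \<inter> V1" using vA cut_vertex by auto
  ultimately show ?thesis using eA edges1 by (auto simp: mem_subtrees_iff is_tree_def)
qed

lemma subtree_restrict2:
  assumes "(A, B) \<in> subtrees (V1 \<union> V2) (E1 \<union> E2)" "v \<in> A"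
  shows "(A \<inter> V2, B \<inter> E2) \<in> subtrees V2 E2"
  using cut_vertex_union.subtree_restrict1[OF swap] assms by (simp add: Un_commute)

lemma acyclic_graph_Un:
  assumes B1: "B1 \<subseteq> E1" "acyclic_graph B1" and B2: "B2 \<subseteq> E2" "acyclic_graph B2"
  shows "acyclic_graph (B1 \<union> B2)"
  unfolding acyclic_graph_def
proof
  assume "\<exists>vs. is_cycle (B1 \<union> B2) vs"
  then obtain vs where cy: "is_cycle (B1 \<union> B2) vs" by blast
  define L where "L = length vs"
  define edge where "edge k = {vs ! k, vs ! ((k + 1) mod L)}" for k
  define P where "P k \<longleftrightarrow> edge k \<in> B1" for k
  have L: "L \<ge> 3" and dist: "distinct vs" using cy by (auto simp: is_cycle_def L_def)
  have cycle_iff: "is_cycle B vs \<longleftrightarrow> (\<forall>k<L. edge k \<in> B)" for B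
    using L dist unfolding is_cycle_def L_def edge_def by blast
  have side2: "edge k \<in> B2" if "k < L" "\<not> P k" for k
    using cy that unfolding cycle_iff P_def by blast
  have "\<exists>i<L. P i"
    using B2 side2 cycle_iff[of B2] unfolding acyclic_graph_def by blast
  moreover have "\<exists>j<L. \<not> P j"
    using B1 cycle_iff[of B1] unfolding acyclic_graph_def P_def by blast
  ultimately obtain i j where ij: "i < L" "j < L" "P i" "\<not> P j" by blast
  obtain k where k: "k < L" "P k" "\<not> P ((k + 1) mod L)"
    using ex_cyclic_transition[OF ij] by blast
  obtain k' where k': "k' < L" "\<not> P k'" "P ((k' + 1) mod L)"
    using ex_cyclic_transition[of j L i "\<lambda>x. \<not> P x"] ij by auto
  \<comment> \<open>The cycle switches sides at least twice, and every switch happens at the cut vertex.\<close>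
  have switch: "vs ! ((k + 1) mod L) = v" if "k < L" "P k \<noteq> P ((k + 1) mod L)" for k
  proof -
    let ?m = "(k + 1) mod L"
    have "?m < L" using L by simp
    have "vs ! ?m \<in> edge k" "vs ! ?m \<in> edge ?m" by (simp_all add: edge_def)
    moreover have "edge k \<in> B1 \<and> edge ?m \<in> B2 \<or> edge k \<in> B2 \<and> edge ?m \<in> B1"
      using that \<open>?m < L\<close> side2 P_def by auto
    ultimately have "vs ! ?m \<in> V1 \<inter> V2" using B1 B2 edges1 edges2 by blast
    then show ?thesis using cut_vertex by auto
  qed
  have "vs ! ((k + 1) mod L) = vs ! ((k' + 1) mod L)" using switch k k' by auto
  moreover have "(k + 1) mod L < length vs" "(k' + 1) mod L < length vs"
    using L unfolding L_def by (meson mod_less_divisor order.strict_trans2 zero_less_numeral)+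
  ultimately have "(k + 1) mod L = (k' + 1) mod L"
    using nth_eq_iff_index_eq[OF dist] by blast
  then show False using Suc_mod_inj k k' by blast
qed

lemma subtree_Un:
  assumes T1: "(A1, B1) \<in> subtrees V1 E1" and T2: "(A2, B2) \<in> subtrees V2 E2"
    and v: "v \<in> A1" "v \<in> A2"
  shows "(A1 \<union> A2, B1 \<union> B2) \<in> subtrees (V1 \<union> V2) (E1 \<union> E2)"
proof -
  from T1 have s1: "A1 \<subseteq> V1" "B1 \<subseteq> E1" "\<forall>e\<in>B1. e \<subseteq> A1"
    and c1: "connected_graph A1 B1" and a1: "acyclic_graph B1"
    by (auto simp: mem_subtrees_iff is_tree_def)
  from T2 have s2: "A2 \<subseteq> V2" "B2 \<subseteq> E2" "\<forall>e\<in>B2. e \<subseteq> A2"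
    and c2: "connected_graph A2 B2" and a2: "acyclic_graph B2"
    by (auto simp: mem_subtrees_iff is_tree_def)
  have "(u, v) \<in> (adj_rel (B1 \<union> B2))\<^sup>*" if "u \<in> A1 \<union> A2" for u
  proof -
    have "(u, v) \<in> (adj_rel B1)\<^sup>* \<or> (u, v) \<in> (adj_rel B2)\<^sup>*"
      using that c1 c2 v unfolding connected_graph_def by blast
    then show ?thesis by (metis Un_upper1 Un_upper2 rtrancl_adj_rel_mono)
  qed
  then have "connected_graph (A1 \<union> A2) (B1 \<union> B2)" by (rule connected_graphI_hub)
  moreover have "acyclic_graph (B1 \<union> B2)" using acyclic_graph_Un s1(2) s2(2) a1 a2 by simp
  ultimately have "is_tree (A1 \<union> A2) (B1 \<union> B2)" using v by (auto simp: is_tree_def)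
  then show ?thesis using s1 s2 by (auto simp: mem_subtrees_iff)
qed

lemma subtree_avoiding_cut_vertex1:
  assumes T: "(A, B) \<in> subtrees (V1 \<union> V2) (E1 \<union> E2)" and vA: "v \<notin> A"
    and u: "u \<in> A" "u \<in> V1"
  shows "(A, B) \<in> subtrees V1 E1"
proof -
  from T have BE: "B \<subseteq> E1 \<union> E2" and eA: "\<forall>e\<in>B. e \<subseteq> A" and tr: "is_tree A B"
    by (auto simp: mem_subtrees_iff)
  have "x \<in> V1" if "(u, x) \<in> (adj_rel B)\<^sup>*" for x
    using that
  proof (induction rule: rtrancl_induct)
    case (step y z)
    then have yz: "{y, z} \<in> B" by simp
    show ?case
    proof (cases "{y, z} \<in> E1")
      case False
      then have "{y, z} \<in> E2" using yz BE by blast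
      then have "y \<in> V2" using edges2 by blast
      then have "y = v" using step.IH cut_vertex by blast
      moreover have "y \<in> A" using yz eA by auto
      ultimately show ?thesis using vA by simp
    qed (use edges1 in auto)
  qed (use u in simp)
  then have AV1: "A \<subseteq> V1" using tr u by (auto simp: is_tree_def connected_graph_def)
  have "B \<subseteq> E1"
  proof
    fix e assume eB: "e \<in> B"
    show "e \<in> E1"
    proof (rule ccontr)
      assume "e \<notin> E1"
      then have "e \<subseteq> V1 \<inter> V2" using eB BE eA AV1 edges2 by blast
      then have "e \<subseteq> {v}" using cut_vertex by simp
      moreover have "e \<in> E1 \<union> E2" using eB BE by (rule subsetD[rotated])
      ultimately show False using loop_free_edge_not_subset_singleton[OF loop_free] by blast
    qed
  qed
  then show ?thesis using AV1 eA tr by (simp add: mem_subtrees_iff)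
qed

lemma subtree_avoiding_cut_vertex2:
  assumes "(A, B) \<in> subtrees (V1 \<union> V2) (E1 \<union> E2)" "v \<notin> A" "u \<in> A" "u \<in> V2"
  shows "(A, B) \<in> subtrees V2 E2"
  using cut_vertex_union.subtree_avoiding_cut_vertex1[OF swap] assms by (simp add: Un_commute)

lemma subtrees_Un_avoiding_cut_vertex:
  "{T \<in> subtrees (V1 \<union> V2) (E1 \<union> E2). v \<notin> fst T} =
     {T \<in> subtrees V1 E1. v \<notin> fst T} \<union> {T \<in> subtrees V2 E2. v \<notin> fst T}"
proof (intro equalityI subsetI)
  fix T assume T: "T \<in> {T \<in> subtrees (V1 \<union> V2) (E1 \<union> E2). v \<notin> fst T}"
  obtain A B where AB: "T = (A, B)" by fastforce
  with T have sub: "(A, B) \<in> subtrees (V1 \<union> V2) (E1 \<union> E2)" and vA: "v \<notin> A" by auto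
  then have "A \<noteq> {}" "A \<subseteq> V1 \<union> V2" by (auto simp: mem_subtrees_iff is_tree_def)
  then obtain u where "u \<in> A" "u \<in> V1 \<or> u \<in> V2" by auto
  then have "(A, B) \<in> subtrees V1 E1 \<or> (A, B) \<in> subtrees V2 E2"
    using subtree_avoiding_cut_vertex1[OF sub vA] subtree_avoiding_cut_vertex2[OF sub vA] by auto
  then show "T \<in> {T \<in> subtrees V1 E1. v \<notin> fst T} \<union> {T \<in> subtrees V2 E2. v \<notin> fst T}"
    using AB vA by auto
next
  fix T assume "T \<in> {T \<in> subtrees V1 E1. v \<notin> fst T} \<union> {T \<in> subtrees V2 E2. v \<notin> fst T}"
  moreover have "subtrees V1 E1 \<subseteq> subtrees (V1 \<union> V2) (E1 \<union> E2)"
    "subtrees V2 E2 \<subseteq> subtrees (V1 \<union> V2) (E1 \<union> E2)"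
    by (simp_all add: subtrees_mono)
  ultimately show "T \<in> {T \<in> subtrees (V1 \<union> V2) (E1 \<union> E2). v \<notin> fst T}" by auto
qed

lemma subtrees_avoiding_cut_vertex_disjoint:
  "{T \<in> subtrees V1 E1. v \<notin> fst T} \<inter> {T \<in> subtrees V2 E2. v \<notin> fst T} = {}"
proof -
  have "fst T = {}" if "T \<in> subtrees V1 E1" "T \<in> subtrees V2 E2" "v \<notin> fst T" for T
  proof -
    have "fst T \<subseteq> V1 \<inter> V2" using that by (auto simp: subtrees_def)
    then show ?thesis using that(3) cut_vertex by auto
  qed
  moreover have "fst T \<noteq> {}" if "T \<in> subtrees V1 E1" for T
    using that by (auto simp: subtrees_def is_tree_def)
  ultimately show ?thesis by blast
qed

lemma subtrees_Un_through_cut_vertex: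
  "{T \<in> subtrees (V1 \<union> V2) (E1 \<union> E2). v \<in> fst T} =
     glue ` ({T \<in> subtrees V1 E1. v \<in> fst T} \<times> {T \<in> subtrees V2 E2. v \<in> fst T})"
proof (intro equalityI subsetI)
  fix T assume T: "T \<in> {T \<in> subtrees (V1 \<union> V2) (E1 \<union> E2). v \<in> fst T}"
  obtain A B where AB: "T = (A, B)" by fastforce
  with T have "A \<subseteq> V1 \<union> V2" "B \<subseteq> E1 \<union> E2" by (auto simp: mem_subtrees_iff)
  then have "T = glue ((A \<inter> V1, B \<inter> E1), (A \<inter> V2, B \<inter> E2))"
    using AB by (auto simp: glue_def)
  moreover have "(A \<inter> V1, B \<inter> E1) \<in> subtrees V1 E1" "(A \<inter> V2, B \<inter> E2) \<in> subtrees V2 E2"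
    using T AB subtree_restrict1 subtree_restrict2 by auto
  moreover have "v \<in> A \<inter> V1" "v \<in> A \<inter> V2" using T AB cut_vertex by auto
  ultimately show "T \<in> glue ` ({T \<in> subtrees V1 E1. v \<in> fst T} \<times> {T \<in> subtrees V2 E2. v \<in> fst T})"
    by force
qed (auto simp: glue_def intro: subtree_Un)

lemma inj_on_glue:
  "inj_on glue ({T \<in> subtrees V1 E1. v \<in> fst T} \<times> {T \<in> subtrees V2 E2. v \<in> fst T})"
proof (rule inj_onI)
  fix x y
  assume x: "x \<in> {T \<in> subtrees V1 E1. v \<in> fst T} \<times> {T \<in> subtrees V2 E2. v \<in> fst T}"
    and y: "y \<in> {T \<in> subtrees V1 E1. v \<in> fst T} \<times> {T \<in> subtrees V2 E2. v \<in> fst T}"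
    and eq: "glue x = glue y"
  obtain A1 B1 A2 B2 A1' B1' A2' B2' where
    xy: "x = ((A1, B1), (A2, B2))" "y = ((A1', B1'), (A2', B2'))"
    by (metis prod.collapse)
  have s: "A1 \<subseteq> V1" "B1 \<subseteq> E1" "A2 \<subseteq> V2" "B2 \<subseteq> E2" "v \<in> A1" "v \<in> A2"
      "A1' \<subseteq> V1" "B1' \<subseteq> E1" "A2' \<subseteq> V2" "B2' \<subseteq> E2" "v \<in> A1'" "v \<in> A2'"
    using x y xy by (auto simp: mem_subtrees_iff)
  have "A1 \<union> A2 = A1' \<union> A2'" "B1 \<union> B2 = B1' \<union> B2'" using eq xy by (auto simp: glue_def)
  moreover have "A1 = (A1 \<union> A2) \<inter> V1" "A1' = (A1' \<union> A2') \<inter> V1"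
      "A2 = (A1 \<union> A2) \<inter> V2" "A2' = (A1' \<union> A2') \<inter> V2"
    using s cut_vertex by auto
  moreover have "B1 = (B1 \<union> B2) \<inter> E1" "B1' = (B1' \<union> B2') \<inter> E1"
      "B2 = (B1 \<union> B2) \<inter> E2" "B2' = (B1' \<union> B2') \<inter> E2"
    using s edges_disjoint by auto
  ultimately show "x = y" using xy by metis
qed

lemma count_subtrees_Un_avoiding_cut_vertex:
  assumes "finite V1" "finite V2" "finite E1" "finite E2"
  shows "count_subtrees (V1 \<union> V2) (E1 \<union> E2) (\<lambda>A. v \<notin> A \<and> P A) =
           count_subtrees V1 E1 (\<lambda>A. v \<notin> A \<and> P A) + count_subtrees V2 E2 (\<lambda>A. v \<notin> A \<and> P A)"
proof -
  let ?S = "subtrees (V1 \<union> V2) (E1 \<union> E2)" and ?S1 = "subtrees V1 E1" and ?S2 = "subtrees V2 E2"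
  have "{T \<in> ?S. v \<notin> fst T \<and> P (fst T)} =
      {T \<in> ?S1. v \<notin> fst T \<and> P (fst T)} \<union> {T \<in> ?S2. v \<notin> fst T \<and> P (fst T)}"
    using subtrees_Un_avoiding_cut_vertex by blast
  moreover have "{T \<in> ?S1. v \<notin> fst T \<and> P (fst T)} \<inter> {T \<in> ?S2. v \<notin> fst T \<and> P (fst T)} = {}"
    using subtrees_avoiding_cut_vertex_disjoint by blast
  moreover have "finite ?S1" "finite ?S2" using assms by (simp_all add: finite_subtrees)
  ultimately show ?thesis unfolding count_subtrees_def by (simp add: card_Un_disjoint)
qed

lemma count_subtrees_Un_through_cut_vertex:
  assumes P: "\<And>A1 A2. A1 \<subseteq> V1 \<Longrightarrow> A2 \<subseteq> V2 \<Longrightarrow> v \<in> A2 \<Longrightarrow> P (A1 \<union> A2) \<longleftrightarrow> P A2"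
  shows "count_subtrees (V1 \<union> V2) (E1 \<union> E2) (\<lambda>A. v \<in> A \<and> P A) =
           count_subtrees V1 E1 (\<lambda>A. v \<in> A) * count_subtrees V2 E2 (\<lambda>A. v \<in> A \<and> P A)"
proof -
  let ?S = "subtrees (V1 \<union> V2) (E1 \<union> E2)" and ?S1 = "subtrees V1 E1" and ?S2 = "subtrees V2 E2"
  have glue_P: "P (fst (glue (T1, T2))) \<longleftrightarrow> P (fst T2)"
    if "T1 \<in> ?S1" "T2 \<in> ?S2" "v \<in> fst T2" for T1 T2
    using that P[of "fst T1" "fst T2"] by (auto simp: glue_def subtrees_def split: prod.splits)
  have "{T \<in> ?S. v \<in> fst T \<and> P (fst T)} =
      {T \<in> glue ` ({T \<in> ?S1. v \<in> fst T} \<times> {T \<in> ?S2. v \<in> fst T}). P (fst T)}"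
    using subtrees_Un_through_cut_vertex by blast
  also have "\<dots> = glue ` ({T \<in> ?S1. v \<in> fst T} \<times> {T \<in> ?S2. v \<in> fst T \<and> P (fst T)})"
    using glue_P by force
  finally have "{T \<in> ?S. v \<in> fst T \<and> P (fst T)} =
      glue ` ({T \<in> ?S1. v \<in> fst T} \<times> {T \<in> ?S2. v \<in> fst T \<and> P (fst T)})" .
  moreover have "inj_on glue ({T \<in> ?S1. v \<in> fst T} \<times> {T \<in> ?S2. v \<in> fst T \<and> P (fst T)})"
    by (rule inj_on_subset[OF inj_on_glue]) auto
  ultimately show ?thesis unfolding count_subtrees_def by (simp add: card_image card_cartesian_product)
qed

lemma count_subtrees_Un:
  assumes fin: "finite V1" "finite V2" "finite E1" "finite E2"
    and P: "\<And>A1 A2. A1 \<subseteq> V1 \<Longrightarrow> A2 \<subseteq> V2 \<Longrightarrow> v \<in> A2 \<Longrightarrow> P (A1 \<union> A2) \<longleftrightarrow> P A2"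
  shows "count_subtrees (V1 \<union> V2) (E1 \<union> E2) P =
           count_subtrees V1 E1 (\<lambda>A. v \<notin> A \<and> P A) + count_subtrees V2 E2 (\<lambda>A. v \<notin> A \<and> P A)
           + count_subtrees V1 E1 (\<lambda>A. v \<in> A) * count_subtrees V2 E2 (\<lambda>A. v \<in> A \<and> P A)"
  using count_subtrees_split[of "V1 \<union> V2" "E1 \<union> E2" P "\<lambda>A. v \<in> A"] fin
    count_subtrees_Un_avoiding_cut_vertex[OF fin] count_subtrees_Un_through_cut_vertex[OF P]
  by simp

end

section \<open>Subtrees of the hexagon\<close>

definition hexagon_V :: "nat set" where
  "hexagon_V = {0, 1, 2, 3, 4, 5}"

definition hexagon_E :: "nat set set" where
  "hexagon_E = {{0, 1}, {1, 2}, {2, 3}, {3, 4}, {4, 5}, {5, 0}}"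

lemma hexagon_V_eq: "hexagon_V = {0..<6}"
  by (auto simp: hexagon_V_def)

lemma hexagon_E_eq: "hexagon_E = (\<lambda>j. {j, (j + 1) mod 6}) ` {0..<6}"
proof -
  have "{0..<6::nat} = {0, 1, 2, 3, 4, 5}" by auto
  then have "(\<lambda>j. {j, (j + 1) mod 6}) ` {0..<6::nat} = {{0, (0 + 1) mod 6}, {1, (1 + 1) mod 6},
     {2, (2 + 1) mod 6}, {3, (3 + 1) mod 6}, {4, (4 + 1) mod 6}, {5, (5 + 1) mod 6}}"
    by (simp only: image_insert image_empty)
  moreover have succ: "((0::nat) + 1) mod 6 = 1" "((1::nat) + 1) mod 6 = 2" "((2::nat) + 1) mod 6 = 3"
    "((3::nat) + 1) mod 6 = 4" "((4::nat) + 1) mod 6 = 5" "((5::nat) + 1) mod 6 = 0" by simp_all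
  ultimately show ?thesis unfolding hexagon_E_def by (simp only: succ)
qed

lemma mem_hexagon_V: "j \<in> hexagon_V \<longleftrightarrow> j < 6"
  by (simp add: hexagon_V_eq)

lemma finite_hexagon: "finite hexagon_V" "finite hexagon_E"
  by (simp_all add: hexagon_V_def hexagon_E_def)

lemma hexagon_edges: "\<forall>e\<in>hexagon_E. e \<subseteq> hexagon_V"
  by (simp add: hexagon_E_def hexagon_V_def)

lemma loop_free_hexagon: "loop_free hexagon_E"
  unfolding loop_free_def hexagon_E_def by simp

lemma hexagon_neighbours:
  assumes "{x, y} \<in> hexagon_E" "{x, z} \<in> hexagon_E" "y \<noteq> z"
  shows "y = (x + 1) mod 6 \<or> z = (x + 1) mod 6"
  using assms unfolding hexagon_E_def by (auto simp: doubleton_eq_iff)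

lemma acyclic_graph_hexagon_subset:
  assumes B: "B \<subseteq> hexagon_E" "B \<noteq> hexagon_E"
  shows "acyclic_graph B"
  unfolding acyclic_graph_def
proof
  assume "\<exists>vs. is_cycle B vs"
  then obtain vs where cy: "is_cycle B vs" by blast
  \<comment> \<open>Of the two cycle neighbours of a vertex x, one must be its hexagon successor x + 1.\<close>
  have step: "(x + 1) mod 6 \<in> set vs \<and> {x, (x + 1) mod 6} \<in> B" if x: "x \<in> set vs" for x
  proof -
    obtain y z where "y \<noteq> z" "y \<in> set vs" "z \<in> set vs" "{x, y} \<in> B" "{x, z} \<in> B"
      using is_cycle_two_neighbours[OF cy x] by blast
    moreover from this have "y = (x + 1) mod 6 \<or> z = (x + 1) mod 6"
      using B(1) hexagon_neighbours by blast
    ultimately show ?thesis by blast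
  qed
  obtain x0 where x0: "x0 \<in> set vs" using cy by (cases vs) (auto simp: is_cycle_def)
  have "{x0, (x0 + 1) mod 6} \<in> hexagon_E" using step[OF x0] B(1) by blast
  then have "x0 < 6" by (auto simp: hexagon_E_def doubleton_eq_iff)
  have all: "(x0 + j) mod 6 \<in> set vs" for j
  proof (induction j)
    case 0 then show ?case using x0 \<open>x0 < 6\<close> by simp
  next
    case (Suc j)
    from step[OF Suc] show ?case by (simp add: mod_Suc_eq)
  qed
  have "x \<in> set vs" if "x < 6" for x
  proof -
    have "(x0 + (x + 6 - x0)) mod 6 = x" using that \<open>x0 < 6\<close> by simp
    then show ?thesis using all[of "x + 6 - x0"] by simp
  qed
  then have "{x, (x + 1) mod 6} \<in> B" if "x < 6" for x using step that by blast
  then have "hexagon_E \<subseteq> B" unfolding hexagon_E_eq by auto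
  then show False using B by blast
qed

lemma not_acyclic_graph_hexagon: "\<not> acyclic_graph hexagon_E"
proof -
  have "is_cycle hexagon_E [0, 1, 2, 3, 4, 5]"
    unfolding is_cycle_def hexagon_E_eq by (auto simp: less_Suc_eq)
  then show ?thesis by (auto simp: acyclic_graph_def)
qed

definition grow :: "'a set set \<Rightarrow> 'a set \<Rightarrow> 'a set" where
  "grow B S = S \<union> \<Union>{e \<in> B. e \<inter> S \<noteq> {}}"

lemma grow_empty: "grow {} S = S"
  by (simp add: grow_def)

lemma grow_insert: "grow (insert e B) S = (if e \<inter> S \<noteq> {} then e \<union> grow B S else grow B S)"
  unfolding grow_def by auto

lemma subset_funpow_grow: "S \<subseteq> (grow B ^^ k) S"
  by (induction k) (auto simp: grow_def)

lemma reachable_of_funpow_grow: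
  assumes B: "loop_free B" and w: "w \<in> (grow B ^^ k) S"
  shows "\<exists>s\<in>S. (s, w) \<in> (adj_rel B)\<^sup>*"
  using w
proof (induction k arbitrary: w)
  case (Suc k)
  let ?S = "(grow B ^^ k) S"
  have "w \<in> grow B ?S" using Suc.prems by simp
  then have "w \<in> ?S \<or> (\<exists>e\<in>B. e \<inter> ?S \<noteq> {} \<and> w \<in> e)" unfolding grow_def by blast
  then show ?case
  proof
    assume "\<exists>e\<in>B. e \<inter> ?S \<noteq> {} \<and> w \<in> e"
    then obtain e x where e: "e \<in> B" "x \<in> e" "x \<in> ?S" "w \<in> e" by blast
    obtain s where s: "s \<in> S" "(s, x) \<in> (adj_rel B)\<^sup>*" using Suc.IH[OF e(3)] by blast
    show ?thesis
    proof (cases "x = w")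
      case False
      obtain a b where "e = {a, b}" using B e(1) unfolding loop_free_def card_2_iff by blast
      then have "e = {x, w}" using e(2,4) False by auto
      then have "(x, w) \<in> adj_rel B" using e(1) by simp
      then show ?thesis using s by (meson rtrancl.rtrancl_into_rtrancl)
    qed (use s in blast)
  qed (use Suc.IH in blast)
qed auto

text \<open>Connectivity of an edge set of the hexagon is decided by growing a vertex set from the least
  vertex: since there are only six vertices, five growth steps reach everything reachable.\<close>

definition hexagon_reach :: "nat set set \<Rightarrow> nat set" where
  "hexagon_reach B = (grow B ^^ 5) {Min (\<Union>B)}"

lemma hexagon_reach_unfold:
  "hexagon_reach B = grow B (grow B (grow B (grow B (grow B {Min (\<Union>B)}))))"
  unfolding hexagon_reach_def by (simp add: numeral_eq_Suc)

lemma all_subsets_insert_iff: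
  "(\<forall>B. B \<subseteq> insert x X \<longrightarrow> Q B) \<longleftrightarrow> (\<forall>B. B \<subseteq> X \<longrightarrow> Q B \<and> Q (insert x B))"
proof
  assume "\<forall>B. B \<subseteq> X \<longrightarrow> Q B \<and> Q (insert x B)"
  then show "\<forall>B. B \<subseteq> insert x X \<longrightarrow> Q B"
    by (metis insert_Diff insert_Diff_single subset_insert_iff)
qed blast

lemma card_subsets_insert:
  assumes "x \<notin> X" "finite X"
  shows "card {B. B \<subseteq> insert x X \<and> Q B} =
    card {B. B \<subseteq> X \<and> Q B} + card {B. B \<subseteq> X \<and> Q (insert x B)}"
proof -
  have eq: "{B. B \<subseteq> insert x X \<and> Q B} =
      {B. B \<subseteq> X \<and> Q B} \<union> insert x ` {B. B \<subseteq> X \<and> Q (insert x B)}"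
  proof (intro equalityI subsetI)
    fix B assume B: "B \<in> {B. B \<subseteq> insert x X \<and> Q B}"
    show "B \<in> {B. B \<subseteq> X \<and> Q B} \<union> insert x ` {B. B \<subseteq> X \<and> Q (insert x B)}"
    proof (cases "x \<in> B")
      case True
      then have "B = insert x (B - {x})" "B - {x} \<subseteq> X" using B by auto
      then show ?thesis using B by (metis (mono_tags, lifting) UnI2 image_eqI mem_Collect_eq)
    qed (use B in auto)
  qed auto
  have "finite {B. B \<subseteq> X \<and> Q B}" "finite {B. B \<subseteq> X \<and> Q (insert x B)}"
    using assms(2) by (simp_all add: finite_subset[of _ "Pow X"] subset_iff)
  moreover have "inj_on (insert x) {B. B \<subseteq> X \<and> Q (insert x B)}"
    using assms(1) by (intro inj_onI) (metis Diff_insert_absorb mem_Collect_eq subsetD)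
  moreover have "{B. B \<subseteq> X \<and> Q B} \<inter> insert x ` {B. B \<subseteq> X \<and> Q (insert x B)} = {}"
    using assms(1) by auto
  ultimately show ?thesis unfolding eq by (simp add: card_Un_disjoint card_image)
qed

lemma card_subsets_empty: "card {B. B \<subseteq> {} \<and> Q B} = (if Q {} then 1 else 0)"
proof -
  have "{B. B \<subseteq> {} \<and> Q B} = (if Q {} then {{}} else {})" by auto
  then show ?thesis by simp
qed

lemma grow_hexagon_reach:
  assumes "B \<subseteq> hexagon_E" "B \<noteq> {}"
  shows "grow B (hexagon_reach B) \<subseteq> hexagon_reach B"
proof -
  have "\<forall>B. B \<subseteq> hexagon_E \<longrightarrow> B \<noteq> {} \<longrightarrow> grow B (hexagon_reach B) \<subseteq> hexagon_reach B"
    unfolding hexagon_E_def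
    apply (simp only: all_subsets_insert_iff all_simps(5) simp_thms)
    apply (simp only: hexagon_reach_unfold Union_insert Union_empty Un_empty_right Un_empty_left
        Un_insert_left Un_insert_right)
    apply (simp add: grow_insert grow_empty split del: if_split)
    done
  then show ?thesis using assms by blast
qed

lemma connected_graph_hexagon_iff:
  assumes B: "B \<subseteq> hexagon_E" "B \<noteq> {}"
  shows "connected_graph (\<Union>B) B \<longleftrightarrow> \<Union>B \<subseteq> hexagon_reach B"
proof -
  let ?m = "Min (\<Union>B)"
  have "finite (\<Union>B)" using B(1) finite_hexagon(2) finite_subset
    by (metis finite_Union hexagon_edges finite_hexagon(1) rev_finite_subset subsetD)
  moreover have "loop_free B" using B(1) loop_free_hexagon by (auto simp: loop_free_def)
  then have "\<Union>B \<noteq> {}" using B(2) loop_free_edge_nonempty by blast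
  ultimately have m: "?m \<in> \<Union>B" by (rule Min_in)
  show ?thesis
  proof
    assume conn: "connected_graph (\<Union>B) B"
    have "w \<in> hexagon_reach B" if "(?m, w) \<in> (adj_rel B)\<^sup>*" for w
      using that
    proof (induction rule: rtrancl_induct)
      case base
      show ?case using subset_funpow_grow[where S = "{?m}" and k = 5] unfolding hexagon_reach_def by simp
    next
      case (step x y)
      then have "{x, y} \<in> B" "x \<in> hexagon_reach B" by simp_all
      then have "y \<in> grow B (hexagon_reach B)" unfolding grow_def by blast
      then show ?case using grow_hexagon_reach[OF B] by blast
    qed
    then show "\<Union>B \<subseteq> hexagon_reach B" using conn m unfolding connected_graph_def by blast
  next
    assume reach: "\<Union>B \<subseteq> hexagon_reach B"
    have "(u, ?m) \<in> (adj_rel B)\<^sup>*" if "u \<in> \<Union>B" for u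
    proof -
      have "u \<in> (grow B ^^ 5) {?m}" using reach that unfolding hexagon_reach_def by blast
      then have "(?m, u) \<in> (adj_rel B)\<^sup>*" using reachable_of_funpow_grow[OF \<open>loop_free B\<close>] by blast
      then show ?thesis by (rule rtrancl_adj_rel_sym)
    qed
    then show "connected_graph (\<Union>B) B" by (rule connected_graphI_hub)
  qed
qed

lemma subtrees_hexagon:
  "subtrees hexagon_V hexagon_E = (\<lambda>u. ({u}, {})) ` hexagon_V \<union>
     (\<lambda>B. (\<Union>B, B)) ` {B. B \<subseteq> hexagon_E \<and> B \<noteq> {} \<and> B \<noteq> hexagon_E \<and> \<Union>B \<subseteq> hexagon_reach B}"
  (is "_ = ?single \<union> ?edges")
proof (intro equalityI subsetI)
  fix T assume T: "T \<in> subtrees hexagon_V hexagon_E"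
  obtain A B where AB: "T = (A, B)" by fastforce
  from T AB have s: "A \<subseteq> hexagon_V" "B \<subseteq> hexagon_E" "\<forall>e\<in>B. e \<subseteq> A" "is_tree A B"
    by (auto simp: mem_subtrees_iff)
  show "T \<in> ?single \<union> ?edges"
  proof (cases "B = {}")
    case True
    then show ?thesis using s(1,4) AB by (auto simp: is_tree_without_edges)
  next
    case False
    have "loop_free B" using s(2) loop_free_hexagon by (auto simp: loop_free_def)
    then have "A = \<Union>B" using tree_vertices_eq_Union s(3,4) False by blast
    moreover have "B \<noteq> hexagon_E" using s(4) not_acyclic_graph_hexagon by (auto simp: is_tree_def)
    moreover have "\<Union>B \<subseteq> hexagon_reach B"
      using connected_graph_hexagon_iff[OF s(2) False] s(4) calculation(1) by (simp add: is_tree_def)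
    ultimately show ?thesis using AB s(2) False by blast
  qed
next
  fix T assume "T \<in> ?single \<union> ?edges"
  then show "T \<in> subtrees hexagon_V hexagon_E"
  proof
    assume "T \<in> ?single"
    then show ?thesis by (auto simp: mem_subtrees_iff is_tree_without_edges)
  next
    assume "T \<in> ?edges"
    then obtain B where B: "T = (\<Union>B, B)" "B \<subseteq> hexagon_E" "B \<noteq> {}" "B \<noteq> hexagon_E"
      "\<Union>B \<subseteq> hexagon_reach B" by blast
    have "connected_graph (\<Union>B) B" using connected_graph_hexagon_iff[OF B(2,3)] B(5) by simp
    moreover have "acyclic_graph B" using acyclic_graph_hexagon_subset[OF B(2,4)] .
    moreover have "loop_free B" using B(2) loop_free_hexagon by (auto simp: loop_free_def)
    then have "\<Union>B \<noteq> {}" using B(3) loop_free_edge_nonempty by blast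
    moreover have "\<Union>B \<subseteq> hexagon_V" using B(2) hexagon_edges by blast
    ultimately show ?thesis using B(1,2) by (auto simp: mem_subtrees_iff is_tree_def)
  qed
qed

lemma count_subtrees_hexagon:
  "count_subtrees hexagon_V hexagon_E P = card {u \<in> hexagon_V. P {u}} +
     card {B. B \<subseteq> hexagon_E \<and> (B \<noteq> {} \<and> (\<exists>e\<in>hexagon_E. e \<notin> B) \<and>
       \<Union>B \<subseteq> hexagon_reach B \<and> P (\<Union>B))}"
proof -
  let ?X = "{u \<in> hexagon_V. P {u}}"
  let ?Y = "{B. B \<subseteq> hexagon_E \<and> (B \<noteq> {} \<and> (\<exists>e\<in>hexagon_E. e \<notin> B) \<and>
       \<Union>B \<subseteq> hexagon_reach B \<and> P (\<Union>B))}"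
  have "{T \<in> subtrees hexagon_V hexagon_E. P (fst T)} = (\<lambda>u. ({u}, {})) ` ?X \<union> (\<lambda>B. (\<Union>B, B)) ` ?Y"
    unfolding subtrees_hexagon by auto
  moreover have "finite ?X" "finite ?Y"
    using finite_hexagon by (auto intro: finite_subset[of _ "Pow hexagon_E"])
  moreover have "card ((\<lambda>u. ({u}, {})) ` ?X) = card ?X" "card ((\<lambda>B. (\<Union>B, B)) ` ?Y) = card ?Y"
    by (auto intro!: card_image inj_onI)
  moreover have "(\<lambda>u. ({u}, {})) ` ?X \<inter> (\<lambda>B. (\<Union>B, B)) ` ?Y = {}" by auto
  ultimately show ?thesis unfolding count_subtrees_def by (simp add: card_Un_disjoint)
qed

lemma card_hexagon_V_filter:
  "card {u \<in> hexagon_V. Q u} = (if Q 0 then 1 else 0) + (if Q 1 then 1 else 0) + (if Q 2 then 1 else 0)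
     + (if Q 3 then 1 else 0) + (if Q 4 then 1 else 0) + (if Q 5 then 1 else 0)"
proof -
  have "card {u \<in> hexagon_V. Q u} = (\<Sum>u\<in>hexagon_V. if Q u then 1 else 0)"
    unfolding card_eq_sum by (rule sum.inter_filter) (simp add: hexagon_V_def)
  then show ?thesis unfolding hexagon_V_def by (simp split del: if_split)
qed

text \<open>By exhaustive enumeration of the edge sets. In a chain, vertex 0 of a hexagon is the cut
  vertex shared with the previous hexagon and vertex d = 1, 2, 3 the one shared with the next.\<close>

lemma count_subtrees_hexagon_values:
  "count_subtrees hexagon_V hexagon_E (\<lambda>_. True) = 36"
  "count_subtrees hexagon_V hexagon_E (\<lambda>A. 0 \<notin> A) = 15"
  "count_subtrees hexagon_V hexagon_E (\<lambda>A. 0 \<in> A) = 21"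
  "count_subtrees hexagon_V hexagon_E (\<lambda>A. 1 \<in> A) = 21"
  "count_subtrees hexagon_V hexagon_E (\<lambda>A. 0 \<notin> A \<and> 1 \<in> A) = 5"
  "count_subtrees hexagon_V hexagon_E (\<lambda>A. 0 \<notin> A \<and> 2 \<in> A) = 8"
  "count_subtrees hexagon_V hexagon_E (\<lambda>A. 0 \<notin> A \<and> 3 \<in> A) = 9"
  "count_subtrees hexagon_V hexagon_E (\<lambda>A. 0 \<in> A \<and> 1 \<in> A) = 16"
  "count_subtrees hexagon_V hexagon_E (\<lambda>A. 0 \<in> A \<and> 2 \<in> A) = 13"
  "count_subtrees hexagon_V hexagon_E (\<lambda>A. 0 \<in> A \<and> 3 \<in> A) = 12"
  unfolding count_subtrees_hexagon unfolding card_hexagon_V_filter hexagon_E_def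
  by (simp_all only: card_subsets_insert card_subsets_empty insert_iff empty_iff doubleton_eq_iff
      simp_thms numeral_eq_iff semiring_norm zero_neq_numeral numeral_neq_zero finite_insert
      finite.emptyI,
    simp_all only: hexagon_reach_unfold Union_insert Union_empty Un_empty_right Un_empty_left
      Un_insert_left Un_insert_right,
    simp_all add: grow_insert grow_empty doubleton_eq_iff split del: if_split)

section \<open>Spiro chains as iterated gluing\<close>

definition spiro_vertex :: "nat list \<Rightarrow> nat \<Rightarrow> nat \<Rightarrow> nat \<times> nat" where
  "spiro_vertex cs k j = spiro_canon cs (k, j)"

lemma spiro_vertex_pos: "0 < j \<Longrightarrow> spiro_vertex cs k j = (k, j)"
  by (simp add: spiro_vertex_def spiro_canon_def)

lemma spiro_vertex_0: "0 < k \<Longrightarrow> spiro_vertex cs k 0 = (k - 1, spiro_exit cs (k - 1))"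
  by (simp add: spiro_vertex_def spiro_canon_def)

lemma inj_on_spiro_vertex: "inj_on (spiro_vertex cs k) hexagon_V"
  unfolding hexagon_V_eq spiro_vertex_def spiro_canon_def by (rule inj_onI) (auto split: if_splits)

lemma spiro_vertex_mem_image_iff:
  "A \<subseteq> hexagon_V \<Longrightarrow> j \<in> hexagon_V \<Longrightarrow> spiro_vertex cs k j \<in> spiro_vertex cs k ` A \<longleftrightarrow> j \<in> A"
  using inj_on_spiro_vertex by (meson inj_on_image_mem_iff)

lemma spiro_V_0: "spiro_V 0 cs = {}"
  by (simp add: spiro_V_def)

lemma spiro_E_0: "spiro_E 0 cs = {}"
  by (simp add: spiro_E_def)

lemma hexagon_positions_Suc:
  "{(i, j). i < Suc k \<and> j < (6::nat)} = {(i, j). i < k \<and> j < 6} \<union> Pair k ` {0..<6}"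
  by auto

lemma spiro_V_Suc: "spiro_V (Suc k) cs = spiro_V k cs \<union> spiro_vertex cs k ` hexagon_V"
  unfolding spiro_V_def hexagon_positions_Suc hexagon_V_eq spiro_vertex_def
  by (auto simp: image_Un image_image)

lemma spiro_E_Suc: "spiro_E (Suc k) cs = spiro_E k cs \<union> (`) (spiro_vertex cs k) ` hexagon_E"
proof -
  have "(\<lambda>(i, j). {spiro_canon cs (i, j), spiro_canon cs (i, (j + 1) mod 6)}) ` Pair k ` {0..<6}
      = (`) (spiro_vertex cs k) ` hexagon_E"
    unfolding hexagon_E_eq spiro_vertex_def by (auto simp: image_image)
  then show ?thesis unfolding spiro_E_def hexagon_positions_Suc image_Un by simp
qed

lemma fst_less_of_mem_spiro_V: "p \<in> spiro_V k cs \<Longrightarrow> fst p < k"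
  unfolding spiro_V_def spiro_canon_def by auto

lemma spiro_edges: "\<forall>e\<in>spiro_E k cs. e \<subseteq> spiro_V k cs"
  unfolding spiro_E_def spiro_V_def by auto

lemma loop_free_spiro_E: "loop_free (spiro_E k cs)"
  unfolding loop_free_def
proof
  fix e assume "e \<in> spiro_E k cs"
  then obtain i j where ij: "i < k" "j < 6" "e = {spiro_vertex cs i j, spiro_vertex cs i ((j + 1) mod 6)}"
    unfolding spiro_E_def spiro_vertex_def by auto
  have "j \<in> hexagon_V" "(j + 1) mod 6 \<in> hexagon_V" "j \<noteq> (j + 1) mod 6"
    using ij by (auto simp: hexagon_V_eq mod_Suc)
  then have "spiro_vertex cs i j \<noteq> spiro_vertex cs i ((j + 1) mod 6)"
    using inj_on_spiro_vertex by (metis inj_on_eq_iff)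
  then show "card e = 2" using ij(3) by simp
qed

lemma finite_spiro: "finite (spiro_V k cs)" "finite (spiro_E k cs)"
proof -
  have "finite {(i, j). i < k \<and> j < (6::nat)}"
    by (rule finite_subset[of _ "{..<k} \<times> {..<6}"]) auto
  then show "finite (spiro_V k cs)" "finite (spiro_E k cs)"
    unfolding spiro_V_def spiro_E_def by simp_all
qed

lemma spiro_exit_mem:
  assumes "set cs \<subseteq> {1, 2, 3}" "m \<le> length cs"
  shows "spiro_exit cs m \<in> {1, 2, 3}"
proof (cases m)
  case (Suc n)
  then have "cs ! n \<in> set cs" using assms(2) by simp
  then show ?thesis using assms(1) Suc by (auto simp: spiro_exit_def)
qed (simp add: spiro_exit_def)

lemma spiro_cut_vertex:
  assumes "0 < k" "spiro_exit cs (k - 1) \<in> {1, 2, 3}"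
  shows "spiro_V k cs \<inter> spiro_vertex cs k ` hexagon_V = {spiro_vertex cs k 0}"
proof
  show "spiro_V k cs \<inter> spiro_vertex cs k ` hexagon_V \<subseteq> {spiro_vertex cs k 0}"
  proof
    fix p assume p: "p \<in> spiro_V k cs \<inter> spiro_vertex cs k ` hexagon_V"
    then obtain j where j: "p = spiro_vertex cs k j" by blast
    have "fst p < k" using p fst_less_of_mem_spiro_V by blast
    then have "j = 0" using j spiro_vertex_pos by (metis fst_conv gr0I less_irrefl)
    then show "p \<in> {spiro_vertex cs k 0}" using j by simp
  qed
  have "spiro_vertex cs k 0 = spiro_canon cs (k - 1, spiro_exit cs (k - 1))"
    using assms by (auto simp: spiro_vertex_0 spiro_canon_def)
  then have "spiro_vertex cs k 0 \<in> spiro_V k cs" using assms unfolding spiro_V_def by force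
  then show "{spiro_vertex cs k 0} \<subseteq> spiro_V k cs \<inter> spiro_vertex cs k ` hexagon_V"
    by (simp add: hexagon_V_def)
qed

lemma cut_vertex_union_spiro:
  assumes "0 < k" "spiro_exit cs (k - 1) \<in> {1, 2, 3}"
  shows "cut_vertex_union (spiro_V k cs) (spiro_vertex cs k ` hexagon_V)
           (spiro_E k cs) ((`) (spiro_vertex cs k) ` hexagon_E) (spiro_vertex cs k 0)"
proof
  show "spiro_V k cs \<inter> spiro_vertex cs k ` hexagon_V = {spiro_vertex cs k 0}"
    using assms by (rule spiro_cut_vertex)
  show "loop_free (spiro_E k cs \<union> (`) (spiro_vertex cs k) ` hexagon_E)"
    using loop_free_spiro_E[of "Suc k" cs] by (simp add: spiro_E_Suc)
qed (simp_all add: spiro_edges edges_image_subset[OF hexagon_edges])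

lemma count_subtrees_spiro_hexagon:
  assumes "\<And>A. A \<subseteq> hexagon_V \<Longrightarrow> P (spiro_vertex cs k ` A) \<longleftrightarrow> Q A"
  shows "count_subtrees (spiro_vertex cs k ` hexagon_V) ((`) (spiro_vertex cs k) ` hexagon_E) P
           = count_subtrees hexagon_V hexagon_E Q"
  unfolding count_subtrees_image[OF inj_on_spiro_vertex hexagon_edges]
  by (rule count_subtrees_cong) (use assms in \<open>auto simp: mem_subtrees_iff\<close>)

lemma STN_spiro_1: "STN (spiro_V 1 cs) (spiro_E 1 cs) = 36"
  using count_subtrees_hexagon_values(1)
  by (simp add: STN_eq_count_subtrees spiro_V_Suc spiro_E_Suc spiro_V_0 spiro_E_0
      count_subtrees_image[OF inj_on_spiro_vertex hexagon_edges])

lemma STN_spiro_Suc: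
  assumes "0 < k" "spiro_exit cs (k - 1) \<in> {1, 2, 3}"
  shows "STN (spiro_V (Suc k) cs) (spiro_E (Suc k) cs) = STN (spiro_V k cs) (spiro_E k cs) + 15
           + 20 * count_subtrees (spiro_V k cs) (spiro_E k cs) (\<lambda>A. spiro_vertex cs k 0 \<in> A)"
proof -
  let ?V = "spiro_V k cs" and ?E = "spiro_E k cs" and ?v = "spiro_vertex cs k 0"
  let ?H = "spiro_vertex cs k ` hexagon_V" and ?F = "(`) (spiro_vertex cs k) ` hexagon_E"
  interpret cut_vertex_union ?V ?H ?E ?F ?v
    using assms by (rule cut_vertex_union_spiro)
  have fin: "finite ?V" "finite ?H" "finite ?E" "finite ?F"
    using finite_spiro finite_hexagon by simp_all
  have "count_subtrees ?H ?F (\<lambda>A. ?v \<notin> A \<and> True) = count_subtrees hexagon_V hexagon_E (\<lambda>A. 0 \<notin> A)"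
    "count_subtrees ?H ?F (\<lambda>A. ?v \<in> A \<and> True) = count_subtrees hexagon_V hexagon_E (\<lambda>A. 0 \<in> A)"
    by (rule count_subtrees_spiro_hexagon, simp add: spiro_vertex_mem_image_iff mem_hexagon_V)+
  moreover have "count_subtrees ?V ?E (\<lambda>_. True) =
      count_subtrees ?V ?E (\<lambda>A. ?v \<in> A \<and> True) + count_subtrees ?V ?E (\<lambda>A. ?v \<notin> A \<and> True)"
    using fin(1,3) by (rule count_subtrees_split)
  ultimately show ?thesis
    using count_subtrees_Un[OF fin, of "\<lambda>_. True"] count_subtrees_hexagon_values(2,3)
    by (simp add: STN_eq_count_subtrees spiro_V_Suc spiro_E_Suc)
qed

lemma count_subtrees_spiro_Suc_exit:
  assumes "0 < k" "spiro_exit cs (k - 1) \<in> {1, 2, 3}" and d: "d \<in> {1, 2, 3}"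
  shows "count_subtrees (spiro_V (Suc k) cs) (spiro_E (Suc k) cs) (\<lambda>A. spiro_vertex cs k d \<in> A) =
           count_subtrees hexagon_V hexagon_E (\<lambda>A. 0 \<notin> A \<and> d \<in> A)
           + count_subtrees (spiro_V k cs) (spiro_E k cs) (\<lambda>A. spiro_vertex cs k 0 \<in> A)
             * count_subtrees hexagon_V hexagon_E (\<lambda>A. 0 \<in> A \<and> d \<in> A)"
proof -
  let ?V = "spiro_V k cs" and ?E = "spiro_E k cs" and ?v = "spiro_vertex cs k 0"
  let ?H = "spiro_vertex cs k ` hexagon_V" and ?F = "(`) (spiro_vertex cs k) ` hexagon_E"
  let ?w = "spiro_vertex cs k d"
  interpret cut_vertex_union ?V ?H ?E ?F ?v
    using assms(1,2) by (rule cut_vertex_union_spiro)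
  have fin: "finite ?V" "finite ?H" "finite ?E" "finite ?F"
    using finite_spiro finite_hexagon by simp_all
  have "d < 6" using d by auto
  have "?w = (k, d)" using d by (intro spiro_vertex_pos) auto
  then have w: "?w \<notin> ?V" using fst_less_of_mem_spiro_V by fastforce
  have "count_subtrees ?V ?E (\<lambda>A. ?v \<notin> A \<and> ?w \<in> A) = 0"
    by (rule count_subtrees_eq_0) (use w in \<open>auto simp: mem_subtrees_iff\<close>)
  moreover have "count_subtrees ?H ?F (\<lambda>A. ?v \<notin> A \<and> ?w \<in> A) =
      count_subtrees hexagon_V hexagon_E (\<lambda>A. 0 \<notin> A \<and> d \<in> A)"
    "count_subtrees ?H ?F (\<lambda>A. ?v \<in> A \<and> ?w \<in> A) =
      count_subtrees hexagon_V hexagon_E (\<lambda>A. 0 \<in> A \<and> d \<in> A)"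
    by (rule count_subtrees_spiro_hexagon, simp add: spiro_vertex_mem_image_iff mem_hexagon_V \<open>d < 6\<close>)+
  moreover have "count_subtrees (?V \<union> ?H) (?E \<union> ?F) (\<lambda>A. ?w \<in> A) =
      count_subtrees ?V ?E (\<lambda>A. ?v \<notin> A \<and> ?w \<in> A) + count_subtrees ?H ?F (\<lambda>A. ?v \<notin> A \<and> ?w \<in> A)
      + count_subtrees ?V ?E (\<lambda>A. ?v \<in> A) * count_subtrees ?H ?F (\<lambda>A. ?v \<in> A \<and> ?w \<in> A)"
    by (rule count_subtrees_Un[OF fin]) (use w in auto)
  ultimately show ?thesis by (simp add: spiro_V_Suc spiro_E_Suc)
qed

text \<open>The pair (a, b) records the number of subtrees of a chain and the number of those containing
  the cut vertex at which the next hexagon will be attached. The constants count subtrees of the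
  attached hexagon: 15 avoid its cut vertex 0 and 21 = 20 + 1 contain it; d (6 - d) avoid 0 but
  contain the vertex d at which the following hexagon is attached, and 16, 13, 12 contain both.
  A single hexagon, whose next attachment vertex is 1, has the pair (36, 21).\<close>

fun spiro_step :: "nat \<times> nat \<Rightarrow> nat \<Rightarrow> nat \<times> nat" where
  "spiro_step (a, b) d = (a + 15 + 20 * b, d * (6 - d) + (if d = 1 then 16 else if d = 2 then 13 else 12) * b)"

definition spiro_counts :: "nat list \<Rightarrow> nat \<times> nat" where
  "spiro_counts cs = foldl spiro_step (36, 21) cs"

lemma spiro_counts_snoc: "spiro_counts (cs @ [d]) = spiro_step (spiro_counts cs) d"
  by (simp add: spiro_counts_def)

lemma spiro_counts_take:
  assumes cs: "set cs \<subseteq> {1, 2, 3}"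
  shows "m \<le> length cs \<Longrightarrow>
    (STN (spiro_V (Suc m) cs) (spiro_E (Suc m) cs),
     count_subtrees (spiro_V (Suc m) cs) (spiro_E (Suc m) cs) (\<lambda>A. spiro_vertex cs (Suc m) 0 \<in> A))
    = spiro_counts (take m cs)"
proof (induction m)
  case 0
  have "spiro_vertex cs (Suc 0) 0 = spiro_vertex cs 0 1"
    by (simp add: spiro_vertex_0 spiro_vertex_pos spiro_exit_def)
  moreover have "count_subtrees (spiro_vertex cs 0 ` hexagon_V) ((`) (spiro_vertex cs 0) ` hexagon_E)
      (\<lambda>A. spiro_vertex cs 0 1 \<in> A) = 21"
    using count_subtrees_hexagon_values(4)
    by (subst count_subtrees_spiro_hexagon) (auto simp: spiro_vertex_mem_image_iff mem_hexagon_V)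
  ultimately show ?case
    using STN_spiro_1 by (simp add: spiro_counts_def spiro_V_Suc spiro_E_Suc spiro_V_0 spiro_E_0)
next
  case (Suc m)
  then have m: "m < length cs" by simp
  let ?d = "cs ! m"
  have d: "?d \<in> {1, 2, 3}" using cs m nth_mem by blast
  have exit: "spiro_exit cs (Suc m - 1) \<in> {1, 2, 3}" using spiro_exit_mem[OF cs] m by simp
  have "spiro_vertex cs (Suc (Suc m)) 0 = spiro_vertex cs (Suc m) ?d"
    using d by (auto simp: spiro_vertex_0 spiro_vertex_pos spiro_exit_def)
  moreover have "take (Suc m) cs = take m cs @ [?d]" using m by (simp add: take_Suc_conv_app_nth)
  moreover have "count_subtrees hexagon_V hexagon_E (\<lambda>A. 0 \<notin> A \<and> ?d \<in> A) = ?d * (6 - ?d)"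
    "count_subtrees hexagon_V hexagon_E (\<lambda>A. 0 \<in> A \<and> ?d \<in> A) =
       (if ?d = 1 then 16 else if ?d = 2 then 13 else 12)"
    using d count_subtrees_hexagon_values by auto
  moreover obtain a b where ab: "spiro_counts (take m cs) = (a, b)" by fastforce
  moreover have "STN (spiro_V (Suc m) cs) (spiro_E (Suc m) cs) = a"
    "count_subtrees (spiro_V (Suc m) cs) (spiro_E (Suc m) cs) (\<lambda>A. spiro_vertex cs (Suc m) 0 \<in> A) = b"
    using Suc.IH m ab by simp_all
  ultimately show ?case
    using STN_spiro_Suc[OF _ exit] count_subtrees_spiro_Suc_exit[OF _ exit d]
    by (simp add: spiro_counts_snoc mult.commute)
qed

lemma STN_spiro:
  assumes "set cs \<subseteq> {1, 2, 3}"
  shows "STN (spiro_V (length cs + 2) cs) (spiro_E (length cs + 2) cs) =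
           fst (spiro_counts cs) + 15 + 20 * snd (spiro_counts cs)"
  using STN_spiro_Suc[of "Suc (length cs)" cs] spiro_exit_mem[OF assms] spiro_counts_take[OF assms, of "length cs"]
  by (simp add: prod_eq_iff)

section \<open>Expected number of subtrees\<close>

definition choice_lists :: "nat \<Rightarrow> nat list set" where
  "choice_lists m = {cs. length cs = m \<and> set cs \<subseteq> {1, 2, 3}}"

definition choice_expectation :: "real \<Rightarrow> real \<Rightarrow> nat \<Rightarrow> (nat list \<Rightarrow> real) \<Rightarrow> real" where
  "choice_expectation p1 p2 m f = (\<Sum>cs\<in>choice_lists m. (\<Prod>c\<leftarrow>cs. choice_prob p1 p2 c) * f cs)"

lemma expected_STN_RSC_eq_choice_expectation:
  "expected_STN_RSC n p1 p2 = choice_expectation p1 p2 (n - 2) (\<lambda>cs. real (STN (spiro_V n cs) (spiro_E n cs)))"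
  by (simp add: expected_STN_RSC_def choice_expectation_def choice_lists_def)

lemma choice_lists_0: "choice_lists 0 = {[]}"
  by (auto simp: choice_lists_def)

lemma choice_lists_Suc: "choice_lists (Suc m) = (\<lambda>(cs, d). cs @ [d]) ` (choice_lists m \<times> {1, 2, 3})"
proof (intro equalityI subsetI)
  fix xs assume xs: "xs \<in> choice_lists (Suc m)"
  then have "xs \<noteq> []" by (auto simp: choice_lists_def)
  then have "xs = butlast xs @ [last xs]" by simp
  moreover have "butlast xs \<in> choice_lists m" using xs by (auto simp: choice_lists_def dest: in_set_butlastD)
  moreover have "last xs \<in> {1, 2, 3}" using xs \<open>xs \<noteq> []\<close> by (auto simp: choice_lists_def dest!: last_in_set)
  ultimately show "xs \<in> (\<lambda>(cs, d). cs @ [d]) ` (choice_lists m \<times> {1, 2, 3})"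
    by (metis (no_types, lifting) SigmaI case_prod_conv image_eqI)
qed (auto simp: choice_lists_def)

lemma sum_choice_lists_Suc:
  "(\<Sum>cs\<in>choice_lists (Suc m). g cs) = (\<Sum>cs\<in>choice_lists m. \<Sum>d\<in>{1, 2, 3}. g (cs @ [d]))"
proof -
  have inj: "inj_on (\<lambda>(cs, d). cs @ [d]) (choice_lists m \<times> {1, 2, 3})" by (rule inj_onI) auto
  have "(\<Sum>cs\<in>choice_lists (Suc m). g cs) = (\<Sum>p\<in>choice_lists m \<times> {1, 2, 3}. g ((\<lambda>(cs, d). cs @ [d]) p))"
    unfolding choice_lists_Suc by (rule sum.reindex[OF inj, unfolded comp_def])
  also have "\<dots> = (\<Sum>cs\<in>choice_lists m. \<Sum>d\<in>{1, 2, 3}. g (cs @ [d]))"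
    by (subst sum.cartesian_product) (simp add: case_prod_beta)
  finally show ?thesis .
qed

lemma choice_expectation_0: "choice_expectation p1 p2 0 f = f []"
  by (simp add: choice_expectation_def choice_lists_0)

lemma choice_expectation_Suc:
  "choice_expectation p1 p2 (Suc m) f =
     choice_expectation p1 p2 m (\<lambda>cs. \<Sum>d\<in>{1, 2, 3}. choice_prob p1 p2 d * f (cs @ [d]))"
  unfolding choice_expectation_def sum_choice_lists_Suc by (simp add: sum_distrib_left algebra_simps)

lemma choice_expectation_cong:
  "(\<And>cs. cs \<in> choice_lists m \<Longrightarrow> f cs = g cs) \<Longrightarrow> choice_expectation p1 p2 m f = choice_expectation p1 p2 m g"
  unfolding choice_expectation_def by simp

lemma choice_expectation_add:
  "choice_expectation p1 p2 m (\<lambda>cs. f cs + g cs) = choice_expectation p1 p2 m f + choice_expectation p1 p2 m g"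
  unfolding choice_expectation_def by (simp add: sum.distrib algebra_simps)

lemma choice_expectation_cmult: "choice_expectation p1 p2 m (\<lambda>cs. c * f cs) = c * choice_expectation p1 p2 m f"
  unfolding choice_expectation_def by (simp add: sum_distrib_left algebra_simps)

text \<open>The choice probabilities sum to 1 whatever p1 and p2 are, so no hypothesis is needed.\<close>

lemma choice_expectation_const: "choice_expectation p1 p2 m (\<lambda>_. c) = c"
proof (induction m)
  case (Suc m)
  have "(\<Sum>d\<in>{1, 2, 3::nat}. choice_prob p1 p2 d * c) = c" by (simp add: choice_prob_def algebra_simps)
  then show ?case using Suc by (simp add: choice_expectation_Suc)
qed (simp add: choice_expectation_0)

lemmas choice_expectation_simps = choice_expectation_add choice_expectation_cmult choice_expectation_const

lemma choice_expectation_fst_spiro_counts_Suc: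
  "choice_expectation p1 p2 (Suc m) (\<lambda>cs. real (fst (spiro_counts cs))) =
     15 + choice_expectation p1 p2 m (\<lambda>cs. real (fst (spiro_counts cs))) + 20 * choice_expectation p1 p2 m (\<lambda>cs. real (snd (spiro_counts cs)))"
proof -
  have "(\<Sum>d\<in>{1, 2, 3}. choice_prob p1 p2 d * real (fst (spiro_counts (cs @ [d])))) =
      15 + real (fst (spiro_counts cs)) + 20 * real (snd (spiro_counts cs))" for cs
    by (cases "spiro_counts cs") (simp add: spiro_counts_snoc choice_prob_def algebra_simps)
  then have "choice_expectation p1 p2 (Suc m) (\<lambda>cs. real (fst (spiro_counts cs))) = choice_expectation p1 p2 m
      (\<lambda>cs. 15 + real (fst (spiro_counts cs)) + 20 * real (snd (spiro_counts cs)))"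
    by (simp only: choice_expectation_Suc)
  then show ?thesis by (simp only: choice_expectation_simps)
qed

lemma choice_expectation_snd_spiro_counts_Suc:
  "choice_expectation p1 p2 (Suc m) (\<lambda>cs. real (snd (spiro_counts cs))) =
     (9 - 4 * p1 - p2) + (12 + 4 * p1 + p2) * choice_expectation p1 p2 m (\<lambda>cs. real (snd (spiro_counts cs)))"
proof -
  have "(\<Sum>d\<in>{1, 2, 3}. choice_prob p1 p2 d * real (snd (spiro_counts (cs @ [d])))) =
      (9 - 4 * p1 - p2) + (12 + 4 * p1 + p2) * real (snd (spiro_counts cs))" for cs
    by (cases "spiro_counts cs") (simp add: spiro_counts_snoc choice_prob_def algebra_simps)
  then have "choice_expectation p1 p2 (Suc m) (\<lambda>cs. real (snd (spiro_counts cs))) = choice_expectation p1 p2 m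
      (\<lambda>cs. (9 - 4 * p1 - p2) + (12 + 4 * p1 + p2) * real (snd (spiro_counts cs)))"
    by (simp only: choice_expectation_Suc)
  then show ?thesis by (simp only: choice_expectation_simps)
qed

lemma choice_expectation_spiro_counts:
  fixes p1 p2 \<alpha> :: real
  assumes \<alpha>: "\<alpha> = 11 + 4 * p1 + p2" "\<alpha> \<noteq> 0"
  shows "choice_expectation p1 p2 m (\<lambda>cs. real (snd (spiro_counts cs))) = (20 * (\<alpha> + 1) ^ (m + 1) - 20 + \<alpha>) / \<alpha>
    \<and> choice_expectation p1 p2 m (\<lambda>cs. real (fst (spiro_counts cs))) =
        400 / \<alpha>\<^sup>2 * (\<alpha> + 1) ^ (m + 1) + (35 * \<alpha> - 400) / \<alpha> * real (m + 1) - 400 / \<alpha>\<^sup>2 + 1"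
proof (induction m)
  case 0
  show ?case using \<alpha>(2) by (simp add: choice_expectation_0 spiro_counts_def field_simps power2_eq_square)
next
  case (Suc m)
  define x where "x = (\<alpha> + 1) ^ (m + 1)"
  have b: "choice_expectation p1 p2 m (\<lambda>cs. real (snd (spiro_counts cs))) = (20 * x - 20 + \<alpha>) / \<alpha>"
    and a: "choice_expectation p1 p2 m (\<lambda>cs. real (fst (spiro_counts cs))) =
      400 / \<alpha>\<^sup>2 * x + (35 * \<alpha> - 400) / \<alpha> * real (m + 1) - 400 / \<alpha>\<^sup>2 + 1"
    using Suc.IH by (simp_all add: x_def)
  have pow: "(\<alpha> + 1) ^ (Suc m + 1) = (\<alpha> + 1) * x" by (simp add: x_def)
  have "choice_expectation p1 p2 (Suc m) (\<lambda>cs. real (snd (spiro_counts cs))) =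
      (20 * ((\<alpha> + 1) * x) - 20 + \<alpha>) / \<alpha>"
    unfolding choice_expectation_snd_spiro_counts_Suc b using \<alpha> by (simp add: field_simps)
  moreover have "choice_expectation p1 p2 (Suc m) (\<lambda>cs. real (fst (spiro_counts cs))) =
      400 / \<alpha>\<^sup>2 * ((\<alpha> + 1) * x) + (35 * \<alpha> - 400) / \<alpha> * real (Suc m + 1) - 400 / \<alpha>\<^sup>2 + 1"
    unfolding choice_expectation_fst_spiro_counts_Suc a b using \<alpha>(2) by (simp add: field_simps power2_eq_square)
  ultimately show ?case unfolding pow ..
qed

lemma expected_STN_RSC_eq_choice_expectation_fst:
  "expected_STN_RSC (m + 1) p1 p2 = choice_expectation p1 p2 m (\<lambda>cs. real (fst (spiro_counts cs)))"
proof (cases m)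
  case 0
  then show ?thesis
    using STN_spiro_1 by (simp add: expected_STN_RSC_eq_choice_expectation choice_expectation_0 spiro_counts_def)
next
  case (Suc k)
  have "expected_STN_RSC (m + 1) p1 p2 =
      choice_expectation p1 p2 k (\<lambda>cs. real (STN (spiro_V (k + 2) cs) (spiro_E (k + 2) cs)))"
    using Suc by (simp add: expected_STN_RSC_eq_choice_expectation)
  also have "\<dots> = choice_expectation p1 p2 k
      (\<lambda>cs. 15 + real (fst (spiro_counts cs)) + 20 * real (snd (spiro_counts cs)))"
  proof (rule choice_expectation_cong)
    fix cs assume "cs \<in> choice_lists k"
    then have "set cs \<subseteq> {1, 2, 3}" "k = length cs" by (auto simp: choice_lists_def)
    then show "real (STN (spiro_V (k + 2) cs) (spiro_E (k + 2) cs)) =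
        15 + real (fst (spiro_counts cs)) + 20 * real (snd (spiro_counts cs))"
      using STN_spiro[of cs] by simp
  qed
  finally show ?thesis
    using Suc by (simp only: choice_expectation_fst_spiro_counts_Suc choice_expectation_simps)
qed

theorem theorem5:
  fixes p1 p2 :: real and n :: nat
  assumes "p1 \<ge> 0" and "p2 \<ge> 0" and "p1 + p2 \<le> 1" and "n \<ge> 1"
  shows "expected_STN_RSC n p1 p2 =
    400 / (11 + 4 * p1 + p2)^2 * (12 + 4 * p1 + p2) ^ n
    + (140 * p1 + 35 * p2 - 15) / (11 + 4 * p1 + p2) * real n
    - 400 / (11 + 4 * p1 + p2)^2 + 1"
proof -
  define \<alpha> where "\<alpha> = 11 + 4 * p1 + p2"
  have "\<alpha> \<noteq> 0" using assms(1,2) by (simp add: \<alpha>_def)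
  obtain m where m: "n = m + 1" using assms(4) by (metis le_add_diff_inverse2)
  have "expected_STN_RSC n p1 p2 = choice_expectation p1 p2 m (\<lambda>cs. real (fst (spiro_counts cs)))"
    using expected_STN_RSC_eq_choice_expectation_fst m by simp
  also have "\<dots> = 400 / \<alpha>\<^sup>2 * (\<alpha> + 1) ^ n + (35 * \<alpha> - 400) / \<alpha> * real n - 400 / \<alpha>\<^sup>2 + 1"
    using choice_expectation_spiro_counts[OF \<alpha>_def \<open>\<alpha> \<noteq> 0\<close>] m by simp
  finally show ?thesis by (simp add: \<alpha>_def algebra_simps)
qed

end
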